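(* Let $\mathcal{F}$ be a finite subcollection of $\mathcal{M}(\mathbb{D})$. Then every composition sequence generated by $\mathcal{F}$ that is of limit-disc type is also of limit-tangent type.
   Context: $\mathbb{D}$ is the open unit disc in $\mathbb{C}$. A Möbius transformation is a map $z\mapsto (az+b)/(cz+d)$ with $a,b,c,d\in\mathbb{C}$, $ad-bc\neq 0$, acting on $\overline{\mathbb{C}}=\mathbb{C}\cup\{\infty\}$. $\mathcal{M}(\mathbb{D})$ denotes the set of Möbius transformations $f$ with $f(\mathbb{D})\subset\mathbb{D}$ and $f(\mathbb{D})\neq\mathbb{D}$. Given a collection $\mathcal{F}$ of maps, a composition sequence generated by $\mathcal{F}$ is a sequence $(F_n)$ with $F_n=f_1f_2\cdots f_n$ (composition), where each $f_i\in\mathcal{F}$. For such a sequence with $\mathcal{F}\subset\mathcal{M}(\mathbb{D})$, the discs $\mathbb{D}\supset F_1(\mathbb{D})\supset F_2(\mathbb{D})\supset\cdots$ are nested, and $\bigcap_n F_n(\overline{\mathbb{D}})$ is either a single point (the sequence is then of limit-point type) or a closed disc of positive radius (the sequence is then of limit-disc type). The sequence is of limit-tangent type if all but finitely many of the discs in $\mathbb{D}\supset F_1(\mathbb{D})\supset F_2(\mathbb{D})\supset\cdots$ share a single common boundary point. *)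

theory Defs
  imports "HOL-Analysis.Analysis"
begin

text \<open>A Moebius transformation z \<mapsto> (a z + b)/(c z + d) is represented by its
coefficient quadruple (a, b, c, d) with a d - b c \<noteq> 0.\<close>

type_synonym mobius = "complex \<times> complex \<times> complex \<times> complex"

definition mob_apply :: "mobius \<Rightarrow> complex \<Rightarrow> complex" where
  "mob_apply m z = (case m of (a, b, c, d) \<Rightarrow> (a * z + b) / (c * z + d))"

definition mob_nondeg :: "mobius \<Rightarrow> bool" where
  "mob_nondeg m = (case m of (a, b, c, d) \<Rightarrow> a * d - b * c \<noteq> 0)"

definition mob_pole_free_on :: "mobius \<Rightarrow> complex set \<Rightarrow> bool" where
  "mob_pole_free_on m S = (case m of (a, b, c, d) \<Rightarrow> (\<forall>z\<in>S. c * z + d \<noteq> 0))"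

definition MD :: "mobius set" where
  "MD = {m. mob_nondeg m \<and> mob_pole_free_on m (ball 0 1)
            \<and> mob_apply m ` ball 0 1 \<subseteq> ball 0 1
            \<and> mob_apply m ` ball 0 1 \<noteq> ball 0 1}"

text \<open>Composition sequence: comp_seq f n = f_0 \<circ> f_1 \<circ> ... \<circ> f_(n-1)
(so comp_seq f n is F_n in the paper, with indices shifted by one).\<close>
primrec comp_seq :: "(nat \<Rightarrow> mobius) \<Rightarrow> nat \<Rightarrow> complex \<Rightarrow> complex" where
  "comp_seq f 0 = id"
| "comp_seq f (Suc n) = comp_seq f n \<circ> mob_apply (f n)"

definition limit_disc_type :: "(nat \<Rightarrow> mobius) \<Rightarrow> bool" where
  "limit_disc_type f =
     (\<exists>c r. r > 0 \<and> (\<Inter>n\<in>{1..}. comp_seq f n ` cball 0 1) = cball c r)"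

definition limit_tangent_type :: "(nat \<Rightarrow> mobius) \<Rightarrow> bool" where
  "limit_tangent_type f =
     (\<exists>p N. \<forall>n\<ge>N. p \<in> frontier (comp_seq f n ` ball 0 1))"

end

theory Submission
  imports Defs "HOL-Complex_Analysis.Complex_Analysis"
begin

text \<open>Every map of \<open>\<M>(\<D>)\<close> is univalent on a neighbourhood of the closed disc and sends at most
  one point of the unit circle to the unit circle. For univalent \<open>F\<close> on \<open>\<D>\<close> with \<open>F z = c\<close>, the
  quantity \<open>\<bar>F' z\<bar> (1 - \<bar>z\<bar>\<^sup>2)\<close> is the conformal radius of \<open>F(\<D>)\<close> at \<open>c\<close>. If the limit set of
  \<open>F\<^sub>n = f\<^sub>1 \<dots> f\<^sub>n\<close> contains a disc of radius \<open>r\<close> about \<open>c\<close>, these radii are at least \<open>r\<close>; by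
  Schwarz--Pick they never increase, and they drop by a factor depending only on \<open>(f\<^sub>n, f\<^sub>n\<^sub>+\<^sub>1)\<close>
  whenever \<open>f\<^sub>n f\<^sub>n\<^sub>+\<^sub>1\<close> maps the closed disc into the open disc. As there are finitely many
  such pairs, eventually every \<open>f\<^sub>n f\<^sub>n\<^sub>+\<^sub>1\<close> sends some \<open>w\<^sub>n\<close> on the circle to the circle, with
  \<open>f\<^sub>n\<^sub>+\<^sub>1(w\<^sub>n)\<close> on the circle too. Uniqueness of contact points gives \<open>w\<^sub>n = f\<^sub>n\<^sub>+\<^sub>2(w\<^sub>n\<^sub>+\<^sub>1)\<close>, so
  \<open>F\<^sub>n\<^sub>+\<^sub>2(w\<^sub>n)\<close> is a single point, and it lies on the boundary of all later discs.\<close>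

section \<open>Maps of the closed unit disc\<close>

lemma univalent_near_cball_restrict:
  assumes V: "cball 0 1 \<subseteq> V" and F: "F holomorphic_on V" "inj_on F V"
  shows "F holomorphic_on ball 0 1" "inj_on F (ball 0 1)"
    "continuous_on (cball 0 1) F" "inj_on F (cball 0 1)"
proof -
  have "ball 0 1 \<subseteq> V" using ball_subset_cball V by (rule order_trans)
  then show "F holomorphic_on ball 0 1" "inj_on F (ball 0 1)"
    using holomorphic_on_subset[OF F(1)] inj_on_subset[OF F(2)] by auto
  show "continuous_on (cball 0 1) F"
    using continuous_on_subset[OF holomorphic_on_imp_continuous_on[OF F(1)] V] .
  show "inj_on F (cball 0 1)" using inj_on_subset[OF F(2) V] .
qed

lemma interior_image_cball_subset:
  fixes F :: "complex \<Rightarrow> complex"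
  assumes V: "open V" "cball 0 1 \<subseteq> V" and F: "continuous_on V F" "inj_on F V"
  shows "interior (F ` cball 0 1) \<subseteq> F ` ball 0 1"
proof
  fix y assume y: "y \<in> interior (F ` cball 0 1)"
  then obtain w where w: "cmod w \<le> 1" "y = F w" using interior_subset by fastforce
  show "y \<in> F ` ball 0 1"
  proof (cases "cmod w < 1")
    case True
    then show ?thesis using w by auto
  next
    case False
    then have w1: "cmod w = 1" using w by simp
    text \<open>Points just outside the circle near \<open>w\<close> would be mapped into \<open>F ` cball 0 1\<close>,
      contradicting injectivity.\<close>
    define x where "x t = complex_of_real (1 + t) * w" for t :: real
    have lim: "(x \<longlongrightarrow> w) (at_right 0)"
      unfolding x_def by (auto intro!: tendsto_eq_intros)
    moreover have "isCont F w"
      using F(1) V continuous_on_eq_continuous_at w by (meson mem_cball_0 subsetD)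
    ultimately have "((\<lambda>t. F (x t)) \<longlongrightarrow> y) (at_right 0)"
      using w(2) isCont_tendsto_compose by blast
    then have "\<forall>\<^sub>F t in at_right 0. F (x t) \<in> interior (F ` cball 0 1)"
      using y by (rule topological_tendstoD[OF _ open_interior])
    moreover have "\<forall>\<^sub>F t in at_right 0. x t \<in> V"
      using topological_tendstoD[OF lim V(1)] V(2) w(1) by auto
    moreover have "\<forall>\<^sub>F t in at_right (0::real). t > 0"
      by (simp add: eventually_at_right_less)
    ultimately have "\<exists>t. F (x t) \<in> interior (F ` cball 0 1) \<and> x t \<in> V \<and> t > 0"
      by (intro eventually_happens'[OF trivial_limit_at_right_real] eventually_conj)
    then obtain t where t: "F (x t) \<in> F ` cball 0 1" "x t \<in> V" "t > 0"
      using interior_subset by blast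
    then obtain u where u: "cmod u \<le> 1" "F (x t) = F u" by auto
    then have "x t = u" using F(2) t(2) V(2) by (meson inj_onD mem_cball_0 subsetD)
    moreover have "cmod (x t) = 1 + t" using w1 t(3) unfolding x_def norm_mult norm_of_real by simp
    ultimately show ?thesis using u t(3) by simp
  qed
qed

lemma frontier_image_ball:
  fixes F :: "complex \<Rightarrow> complex"
  assumes F: "continuous_on (cball 0 1) F" "inj_on F (cball 0 1)" and w: "cmod w = 1"
  shows "F w \<in> frontier (F ` ball 0 1)"
proof -
  have "F ` closure (ball 0 1) \<subseteq> closure (F ` ball 0 1)"
    using F(1) by (intro image_closure_subset) (auto intro: closure_subset[THEN subsetD])
  then have "F w \<in> closure (F ` ball 0 1)" using w by auto
  moreover have "F w \<notin> F ` ball 0 1"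
    using inj_onD[OF F(2)] w by fastforce
  ultimately show ?thesis using interior_subset by (auto simp: frontier_def)
qed

lemma image_ball_eq_ball_if_sphere_to_sphere:
  fixes F :: "complex \<Rightarrow> complex"
  assumes hol: "F holomorphic_on ball 0 1" and inj: "inj_on F (ball 0 1)"
    and cont: "continuous_on (cball 0 1) F"
    and into: "F ` ball 0 1 \<subseteq> ball 0 1" and sphere: "F ` sphere 0 1 \<subseteq> sphere 0 1"
  shows "F ` ball 0 1 = ball 0 1"
proof -
  text \<open>The image is nonempty, open, and relatively closed in the disc, which is connected.\<close>
  have eq: "F ` ball 0 1 = ball 0 1 \<inter> F ` cball 0 1"
    using into sphere by (fastforce simp: subset_iff le_less)
  have "openin (top_of_set (ball 0 1)) (F ` ball 0 1)"
    by (rule open_subset[OF into open_mapping_thm3[OF hol open_ball inj]])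
  moreover have "closedin (top_of_set (ball 0 1)) (F ` ball 0 1)"
    using eq compact_imp_closed[OF compact_continuous_image[OF cont compact_cball]]
    by (auto simp: closedin_closed)
  ultimately show ?thesis
    using connected_ball[of 0 1] unfolding connected_clopen
    by (metis empty_iff imageI mem_ball norm_zero dist_0_norm zero_less_one)
qed

lemma compact_image_in_smaller_ball:
  fixes G :: "'a::topological_space \<Rightarrow> complex"
  assumes "compact S" "continuous_on S G" "\<And>w. w \<in> S \<Longrightarrow> cmod (G w) < 1"
  obtains s where "0 < s" "s < 1" "\<And>w. w \<in> S \<Longrightarrow> cmod (G w) < s"
proof (cases "S = {}")
  case True
  show thesis by (rule that[of "1/2"]) (use True in auto)
next
  case False
  then obtain x where x: "x \<in> S" "\<And>w. w \<in> S \<Longrightarrow> cmod (G w) \<le> cmod (G x)"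
    using continuous_attains_sup[OF assms(1) False continuous_on_norm[OF assms(2)]] by blast
  have "cmod (G x) < 1" using assms(3)[OF x(1)] .
  moreover have "cmod (G w) < (1 + cmod (G x)) / 2" if "w \<in> S" for w
    using x(2)[OF that] \<open>cmod (G x) < 1\<close> by (simp add: field_simps)
  ultimately show thesis
    by (intro that[of "(1 + cmod (G x)) / 2"]) (auto simp: add_pos_nonneg)
qed

section \<open>Schwarz--Pick and the conformal radius\<close>

text \<open>For injective \<open>F\<close> this is the conformal radius of \<open>F ` ball 0 1\<close> at \<open>F z\<close>.\<close>
definition conf_radius :: "(complex \<Rightarrow> complex) \<Rightarrow> complex \<Rightarrow> real" where
  "conf_radius F z = cmod (deriv F z) * (1 - (cmod z)^2)"

lemma one_minus_cnj_mult_self: "1 - cnj w * w = complex_of_real (1 - (cmod w)^2)"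
proof -
  have "cnj w * w = complex_of_real ((cmod w)^2)" by (metis complex_norm_square mult.commute)
  then show ?thesis by simp
qed

lemma Moebius_function_has_field_derivative:
  assumes "1 - cnj w * u \<noteq> 0"
  shows "(Moebius_function 0 w has_field_derivative (1 - cnj w * w) / (1 - cnj w * u)^2) (at u)"
proof -
  have "Moebius_function 0 w = (\<lambda>u. (u - w) / (1 - cnj w * u))"
    by (simp add: fun_eq_iff Moebius_function_simple)
  then show ?thesis
    using assms by (auto intro!: derivative_eq_intros simp: field_simps power2_eq_square)
qed

lemma Moebius_conjugate_has_field_derivative:
  assumes hol: "g holomorphic_on ball 0 1" and z: "cmod z < 1" and gz: "cmod (g z) < 1"
  shows "((Moebius_function 0 (g z) \<circ> g \<circ> Moebius_function 0 (- z)) has_field_derivative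
      deriv g z * of_real ((1 - (cmod z)^2) / (1 - (cmod (g z))^2))) (at 0)"
proof -
  define w where "w = g z"
  have "(Moebius_function 0 (- z) has_field_derivative of_real (1 - (cmod z)^2)) (at 0)"
    using Moebius_function_has_field_derivative[of "- z" 0] by (simp add: one_minus_cnj_mult_self)
  moreover have "(g has_field_derivative deriv g z) (at (Moebius_function 0 (- z) 0))"
    using hol z by (auto simp: Moebius_function_simple intro: holomorphic_derivI)
  moreover have "(Moebius_function 0 w has_field_derivative of_real (1 / (1 - (cmod w)^2)))
      (at (g (Moebius_function 0 (- z) 0)))"
  proof -
    have "(cmod w)^2 < 1" using gz by (simp add: w_def abs_square_less_1)
    then have "1 - cnj w * w \<noteq> 0"
      unfolding one_minus_cnj_mult_self of_real_eq_0_iff by linarith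
    then have "(Moebius_function 0 w has_field_derivative 1 / (1 - cnj w * w)) (at w)"
      using Moebius_function_has_field_derivative[of w w] by (simp add: power2_eq_square)
    then show ?thesis by (simp add: Moebius_function_simple w_def one_minus_cnj_mult_self)
  qed
  ultimately have "((Moebius_function 0 w \<circ> g \<circ> Moebius_function 0 (- z)) has_field_derivative
      of_real (1 / (1 - (cmod w)^2)) * deriv g z * of_real (1 - (cmod z)^2)) (at 0)"
    unfolding o_def by (intro DERIV_chain2) auto
  then show ?thesis by (simp add: w_def field_simps)
qed

lemma Schwarz_Pick:
  assumes hol: "g holomorphic_on ball 0 1" and into: "\<And>z. cmod z < 1 \<Longrightarrow> cmod (g z) < 1"
    and z: "cmod z < 1"
  shows "conf_radius g z \<le> 1 - (cmod (g z))^2"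
proof -
  define w where "w = g z"
  have w: "cmod w < 1" using into z by (simp add: w_def)
  have pos: "0 < 1 - (cmod u)^2" if "cmod u < 1" for u :: complex
    using that by (simp add: abs_square_less_1)
  define \<psi> where "\<psi> = Moebius_function 0 (- z)"
  define k where "k = Moebius_function 0 w \<circ> g \<circ> \<psi>"
  have \<psi>_into: "cmod (\<psi> u) < 1" if "cmod u < 1" for u
    using that z by (simp add: \<psi>_def Moebius_function_norm_lt_1)
  have "(Moebius_function 0 w \<circ> g) holomorphic_on ball 0 1"
    using into by (intro holomorphic_on_compose_gen[OF hol Moebius_function_holomorphic[OF w]]) auto
  then have "k holomorphic_on ball 0 1"
    unfolding k_def using \<psi>_into z
    by (intro holomorphic_on_compose_gen[of \<psi>]) (auto simp: \<psi>_def intro: Moebius_function_holomorphic)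
  moreover have "k 0 = 0"
    by (simp add: k_def \<psi>_def w_def Moebius_function_simple Moebius_function_eq_zero)
  moreover have "cmod (k u) < 1" if "cmod u < 1" for u
    using that \<psi>_into into w by (simp add: k_def Moebius_function_norm_lt_1)
  ultimately have "cmod (deriv k 0) \<le> 1" using Schwarz_Lemma(2)[of k 0] by simp
  moreover have "deriv k 0 = deriv g z * of_real ((1 - (cmod z)^2) / (1 - (cmod w)^2))"
    unfolding k_def \<psi>_def w_def
    using Moebius_conjugate_has_field_derivative[OF hol z w[unfolded w_def]] by (rule DERIV_imp_deriv)
  ultimately have "cmod (deriv g z * of_real ((1 - (cmod z)^2) / (1 - (cmod w)^2))) \<le> 1"
    by simp
  then have "cmod (deriv g z) * ((1 - (cmod z)^2) / (1 - (cmod w)^2)) \<le> 1"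
    unfolding norm_mult norm_of_real using pos[OF z] pos[OF w] by (simp add: abs_of_pos)
  then show ?thesis using pos[OF w] by (simp add: conf_radius_def w_def field_simps)
qed

lemma Schwarz_Pick_shrunk:
  assumes hol: "g holomorphic_on ball 0 1" and into: "\<And>z. cmod z < 1 \<Longrightarrow> cmod (g z) < s"
    and s: "0 < s" "s \<le> 1" and z: "cmod z < 1"
  shows "conf_radius g z \<le> s * (1 - (cmod (g z))^2)"
proof -
  define h where "h u = g u / of_real s" for u
  have "h holomorphic_on ball 0 1" unfolding h_def using hol s by (intro holomorphic_intros) auto
  moreover have "cmod (h u) < 1" if "cmod u < 1" for u
    using into[OF that] s by (simp add: h_def norm_divide)
  ultimately have "conf_radius h z \<le> 1 - (cmod (h z))^2" using Schwarz_Pick z by blast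
  moreover have "deriv h z = deriv g z / of_real s"
    unfolding h_def using hol z
    by (intro deriv_cdivide_right holomorphic_on_imp_differentiable_at) auto
  ultimately have "conf_radius g z / s \<le> 1 - (cmod (g z) / s)^2"
    using s by (simp add: conf_radius_def h_def norm_divide)
  then have "conf_radius g z \<le> s - (cmod (g z))^2 / s"
    using s by (simp add: power_divide field_simps power2_eq_square)
  also have "\<dots> \<le> s * (1 - (cmod (g z))^2)"
  proof -
    have "s * s * (cmod (g z))^2 \<le> (cmod (g z))^2"
      using s by (intro mult_left_le_one_le mult_le_one) auto
    then show ?thesis using s by (simp add: field_simps)
  qed
  finally show ?thesis .
qed

lemma conf_radius_compose_le:
  assumes F: "F holomorphic_on ball 0 1" "inj_on F (ball 0 1)"
    and G: "G holomorphic_on ball 0 1" "\<And>u. cmod u < 1 \<Longrightarrow> cmod (G u) < 1"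
    and bound: "\<And>u. cmod u < 1 \<Longrightarrow> conf_radius G u \<le> \<kappa> * (1 - (cmod (G u))^2)"
    and z: "cmod z < 1" and z': "cmod z' < 1" and same: "F (G z') = F z"
  shows "conf_radius (F \<circ> G) z' \<le> \<kappa> * conf_radius F z"
proof -
  have Gz': "G z' = z" using inj_onD[OF F(2) same] G(2)[OF z'] z by simp
  have "G field_differentiable at z'"
    using G(1) z' by (auto intro: holomorphic_on_imp_differentiable_at)
  moreover have "F field_differentiable at (G z')"
    using F(1) Gz' z by (auto intro: holomorphic_on_imp_differentiable_at)
  ultimately have "deriv (F \<circ> G) z' = deriv F z * deriv G z'"
    using Gz' by (simp add: deriv_chain)
  then have "conf_radius (F \<circ> G) z' = cmod (deriv F z) * conf_radius G z'"
    by (simp add: conf_radius_def norm_mult)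
  also have "\<dots> \<le> cmod (deriv F z) * (\<kappa> * (1 - (cmod z)^2))"
    using bound[OF z'] Gz' by (intro mult_left_mono) simp_all
  finally show ?thesis by (simp add: conf_radius_def ac_simps)
qed

lemma conf_radius_ge_radius:
  assumes F: "F holomorphic_on ball 0 1" "inj_on F (ball 0 1)" and z: "cmod z < 1"
    and r: "0 < r" and ball: "ball (F z) r \<subseteq> F ` ball 0 1"
  shows "r \<le> conf_radius F z"
proof -
  obtain g where g: "g holomorphic_on F ` ball 0 1"
    and dg: "\<And>u. u \<in> ball 0 1 \<Longrightarrow> deriv F u * deriv g (F u) = 1"
    and gF: "\<And>u. u \<in> ball 0 1 \<Longrightarrow> g (F u) = u"
    using holomorphic_has_inverse[OF F(1) open_ball F(2)] by blast
  define A where "A = (\<lambda>u. F z + of_real r * u)"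
  have A_into: "A u \<in> F ` ball 0 1" if "cmod u < 1" for u
    using that r ball by (auto simp: A_def dist_norm norm_mult)
  have "(g \<circ> A) holomorphic_on ball 0 1"
    using A_into
    by (intro holomorphic_on_compose_gen[OF _ g]) (auto simp: A_def intro!: holomorphic_intros)
  moreover have "cmod ((g \<circ> A) u) < 1" if "cmod u < 1" for u
    using A_into[OF that] gF by auto
  ultimately have "conf_radius (g \<circ> A) 0 \<le> 1 - (cmod ((g \<circ> A) 0))^2"
    using Schwarz_Pick by force
  moreover have "(g \<circ> A) 0 = z" using gF z by (simp add: A_def)
  moreover have "deriv (g \<circ> A) 0 = deriv g (F z) * of_real r"
  proof -
    have A': "(A has_field_derivative of_real r) (at 0)"
      unfolding A_def by (auto intro!: derivative_eq_intros)
    then have "A field_differentiable at 0" by (auto simp: field_differentiable_def)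
    moreover have "g field_differentiable at (A 0)"
      using g A_into[of 0] open_mapping_thm3[OF F(1) open_ball F(2)]
      by (auto intro: holomorphic_on_imp_differentiable_at)
    ultimately have "deriv (g \<circ> A) 0 = deriv g (A 0) * deriv A 0" by (rule deriv_chain)
    then show ?thesis using DERIV_imp_deriv[OF A'] by (simp add: A_def)
  qed
  moreover have "cmod (deriv g (F z)) = 1 / cmod (deriv F z)"
    using dg[of z] z
    by (metis mem_ball_0 nonzero_eq_divide_eq norm_divide norm_one mult_not_zero one_neq_zero mult.commute)
  ultimately have "r / cmod (deriv F z) \<le> 1 - (cmod z)^2"
    using r by (simp add: conf_radius_def norm_mult)
  moreover have "deriv F z \<noteq> 0" using dg[of z] z by auto
  ultimately show ?thesis by (simp add: conf_radius_def divide_le_eq mult.commute)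
qed

section \<open>The maps of class \<open>\<M>(\<D>)\<close>\<close>

lemma mob_apply_eq: "mob_apply (a, b, c, d) z = (a * z + b) / (c * z + d)"
  by (simp add: mob_apply_def)

lemma MD_norm_lt_1: "m \<in> MD \<Longrightarrow> cmod z < 1 \<Longrightarrow> cmod (mob_apply m z) < 1"
  by (auto simp: MD_def image_subset_iff)

lemma MD_numerator_le_denominator:
  assumes m: "(a, b, c, d) \<in> MD" and z: "cmod z \<le> 1"
  shows "cmod (a * z + b) \<le> cmod (c * z + d)"
proof -
  have "cmod (a * w + b) - cmod (c * w + d) \<le> 0" if "w \<in> ball 0 1" for w
  proof -
    have "c * w + d \<noteq> 0" using m that by (simp add: MD_def mob_pole_free_on_def)
    moreover have "cmod ((a * w + b) / (c * w + d)) < 1"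
      using MD_norm_lt_1[OF m, of w] that by (simp add: mob_apply_eq)
    ultimately show ?thesis by (simp add: norm_divide divide_less_eq)
  qed
  moreover have "continuous_on (closure (ball 0 1)) (\<lambda>w. cmod (a * w + b) - cmod (c * w + d))"
    by (intro continuous_intros)
  ultimately have "cmod (a * z + b) - cmod (c * z + d) \<le> 0"
    using continuous_le_on_closure z by fastforce
  then show ?thesis by simp
qed

lemma MD_denominator_nonzero:
  assumes m: "(a, b, c, d) \<in> MD" and z: "cmod z \<le> 1"
  shows "c * z + d \<noteq> 0"
proof
  assume pole: "c * z + d = 0"
  have numerator: "a * z + b = 0" using MD_numerator_le_denominator[OF m z] pole by simp
  have "a * d - b * c = a * (c * z + d) - c * (a * z + b)" by (simp add: algebra_simps)
  also have "\<dots> = 0" using pole numerator by simp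
  finally show False using m by (simp add: MD_def mob_nondeg_def)
qed

lemma MD_norm_le_1:
  assumes m: "m \<in> MD" and z: "cmod z \<le> 1"
  shows "cmod (mob_apply m z) \<le> 1"
proof -
  obtain a b c d where [simp]: "m = (a, b, c, d)" by (cases m)
  show ?thesis using MD_numerator_le_denominator[OF _ z] MD_denominator_nonzero[OF _ z] m
    by (simp add: mob_apply_eq norm_divide divide_le_eq)
qed

lemma MD_univalent_near_cball:
  assumes "m \<in> MD"
  obtains U where "open U" "cball 0 1 \<subseteq> U" "mob_apply m holomorphic_on U" "inj_on (mob_apply m) U"
proof -
  obtain a b c d where m: "m = (a, b, c, d)" by (cases m)
  define U where "U = {z. c * z + d \<noteq> 0}"
  have "open U" unfolding U_def by (intro open_Collect_neq continuous_intros)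
  moreover have "cball 0 1 \<subseteq> U" using MD_denominator_nonzero assms by (auto simp: U_def m)
  moreover have "mob_apply m holomorphic_on U"
    unfolding U_def m mob_apply_def by (auto intro!: holomorphic_intros)
  moreover have "inj_on (mob_apply m) U"
  proof (rule inj_onI)
    fix x y assume "x \<in> U" "y \<in> U" "mob_apply m x = mob_apply m y"
    then have "(a * x + b) * (c * y + d) = (a * y + b) * (c * x + d)"
      by (simp add: U_def m mob_apply_eq divide_simps)
    then have "(a * d - b * c) * (x - y) = 0" by (simp add: algebra_simps)
    moreover have "a * d - b * c \<noteq> 0" using assms by (simp add: m MD_def mob_nondeg_def)
    ultimately show "x = y" by simp
  qed
  ultimately show thesis by (rule that)
qed

lemma MD_univalent:
  assumes "m \<in> MD"
  shows "mob_apply m holomorphic_on ball 0 1" "inj_on (mob_apply m) (ball 0 1)"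
    "continuous_on (cball 0 1) (mob_apply m)"
proof -
  obtain U where "open U" "cball 0 1 \<subseteq> U" "mob_apply m holomorphic_on U"
    "inj_on (mob_apply m) U" using MD_univalent_near_cball[OF assms] .
  from univalent_near_cball_restrict[OF this(2-4)]
  show "mob_apply m holomorphic_on ball 0 1" "inj_on (mob_apply m) (ball 0 1)"
    "continuous_on (cball 0 1) (mob_apply m)" by auto
qed

definition boundary_contact :: "mobius \<Rightarrow> complex \<Rightarrow> bool" where
  "boundary_contact m w \<longleftrightarrow> cmod w = 1 \<and> cmod (mob_apply m w) = 1"

lemma MD_sphere_preimage:
  assumes "m \<in> MD" "cmod z \<le> 1" "1 \<le> cmod (mob_apply m z)"
  shows "boundary_contact m z"
  using assms MD_norm_lt_1[of m z] MD_norm_le_1[of m z] by (force simp: boundary_contact_def)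

lemma cmod_add_power2: "(cmod (x + y))^2 = (cmod x)^2 + (cmod y)^2 + 2 * Re (x * cnj y)"
  unfolding cmod_power2 by (simp add: power2_eq_square algebra_simps)

text \<open>The minimum \<open>K - 2 \<bar>\<beta>\<bar>\<close> of \<open>K + 2 Re (\<beta> z)\<close> over the circle is attained only at
  \<open>z = -\<bar>\<beta>\<bar> / \<beta>\<close>.\<close>
lemma sphere_affine_zero_unique:
  fixes \<beta> :: complex and K :: real
  assumes "\<beta> \<noteq> 0" and nonneg: "\<And>z. cmod z = 1 \<Longrightarrow> 0 \<le> K + 2 * Re (\<beta> * z)"
    and w: "cmod w = 1" "K + 2 * Re (\<beta> * w) = 0"
  shows "w = - of_real (cmod \<beta>) / \<beta>"
proof -
  have "2 * cmod \<beta> \<le> K"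
  proof -
    define z where "z = - cnj \<beta> / of_real (cmod \<beta>)"
    have "\<beta> * z = - (\<beta> * cnj \<beta>) / of_real (cmod \<beta>)" by (simp add: z_def)
    also have "\<dots> = - of_real ((cmod \<beta>)^2) / of_real (cmod \<beta>)"
      by (simp only: complex_norm_square)
    also have "\<dots> = - of_real (cmod \<beta>)" using \<open>\<beta> \<noteq> 0\<close> by (simp add: power2_eq_square)
    finally have "Re (\<beta> * z) = - cmod \<beta>" by simp
    moreover have "cmod z = 1" using \<open>\<beta> \<noteq> 0\<close> by (simp add: z_def norm_divide)
    ultimately show ?thesis using nonneg[of z] by simp
  qed
  moreover have "- cmod (\<beta> * w) \<le> Re (\<beta> * w)" using abs_Re_le_cmod[of "\<beta> * w"] by linarith
  moreover have norm_\<beta>w: "cmod (\<beta> * w) = cmod \<beta>" using w(1) by (simp add: norm_mult)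
  ultimately have Re_\<beta>w: "Re (\<beta> * w) = - cmod (\<beta> * w)" using w(2) by linarith
  then have "(Im (\<beta> * w))^2 = 0" using cmod_power2[of "\<beta> * w"] by simp
  then have "\<beta> * w = - of_real (cmod \<beta>)" using Re_\<beta>w norm_\<beta>w by (simp add: complex_eq_iff)
  then show ?thesis using \<open>\<beta> \<noteq> 0\<close> by (simp add: field_simps)
qed

lemma MD_sphere_not_all_contact:
  assumes m: "m \<in> MD"
  shows "\<exists>z. cmod z = 1 \<and> \<not> boundary_contact m z"
proof (rule ccontr)
  assume "\<not> ?thesis"
  then have "mob_apply m ` sphere 0 1 \<subseteq> sphere 0 1" by (auto simp: boundary_contact_def)
  moreover have "mob_apply m ` ball 0 1 \<subseteq> ball 0 1" using MD_norm_lt_1[OF m] by auto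
  ultimately have "mob_apply m ` ball 0 1 = ball 0 1"
    using image_ball_eq_ball_if_sphere_to_sphere[OF MD_univalent[OF m]] by blast
  with m show False by (simp add: MD_def)
qed

text \<open>On the unit circle, \<open>\<bar>c z + d\<bar>\<^sup>2 - \<bar>a z + b\<bar>\<^sup>2\<close> is the real-affine function below.\<close>
lemma MD_boundary_contact_affine:
  fixes a b c d :: complex
  defines "K \<equiv> (cmod c)^2 + (cmod d)^2 - (cmod a)^2 - (cmod b)^2" and "\<beta> \<equiv> c * cnj d - a * cnj b"
  assumes m: "(a, b, c, d) \<in> MD" and z: "cmod z = 1"
  shows "0 \<le> K + 2 * Re (\<beta> * z)"
    and "boundary_contact (a, b, c, d) z \<longleftrightarrow> K + 2 * Re (\<beta> * z) = 0"
proof -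
  have gap: "(cmod (c * z + d))^2 - (cmod (a * z + b))^2 = K + 2 * Re (\<beta> * z)"
    using z by (simp add: cmod_add_power2 K_def \<beta>_def norm_mult algebra_simps)
  have "(cmod (a * z + b))^2 \<le> (cmod (c * z + d))^2"
    using MD_numerator_le_denominator[OF m, of z] z by (simp add: power_mono)
  then show "0 \<le> K + 2 * Re (\<beta> * z)" using gap by linarith
  have "c * z + d \<noteq> 0" using MD_denominator_nonzero[OF m] z by simp
  then have "boundary_contact (a, b, c, d) z \<longleftrightarrow> cmod (a * z + b) = cmod (c * z + d)"
    using z by (simp add: boundary_contact_def mob_apply_eq norm_divide divide_eq_eq)
  also have "\<dots> \<longleftrightarrow> (cmod (a * z + b))^2 = (cmod (c * z + d))^2"
    by (simp add: power2_eq_iff_nonneg)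
  finally show "boundary_contact (a, b, c, d) z \<longleftrightarrow> K + 2 * Re (\<beta> * z) = 0"
    using gap by linarith
qed

lemma MD_boundary_contact_unique:
  assumes m: "m \<in> MD" and w1: "boundary_contact m w1" and w2: "boundary_contact m w2"
  shows "w1 = w2"
proof -
  obtain a b c d where m_eq: "m = (a, b, c, d)" by (cases m)
  define K where "K = (cmod c)^2 + (cmod d)^2 - (cmod a)^2 - (cmod b)^2"
  define \<beta> where "\<beta> = c * cnj d - a * cnj b"
  note affine = MD_boundary_contact_affine[OF m[unfolded m_eq], folded K_def \<beta>_def m_eq]
  have on_sphere: "cmod w1 = 1" "cmod w2 = 1" using w1 w2 by (simp_all add: boundary_contact_def)
  then have zero: "K + 2 * Re (\<beta> * w1) = 0" "K + 2 * Re (\<beta> * w2) = 0"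
    using affine(2) w1 w2 by blast+
  have "\<beta> \<noteq> 0"
  proof
    assume "\<beta> = 0"
    with zero have "boundary_contact m z" if "cmod z = 1" for z using affine(2)[OF that] by simp
    with MD_sphere_not_all_contact[OF m] show False by blast
  qed
  then show ?thesis
    using sphere_affine_zero_unique[OF _ affine(1) on_sphere(1) zero(1)]
      sphere_affine_zero_unique[OF _ affine(1) on_sphere(2) zero(2)] by simp
qed

definition comp_maps_cball_into_ball :: "mobius \<Rightarrow> mobius \<Rightarrow> bool" where
  "comp_maps_cball_into_ball p q \<longleftrightarrow>
     (\<forall>w. cmod w \<le> 1 \<longrightarrow> cmod (mob_apply p (mob_apply q w)) < 1)"

lemma MD_comp_boundary_contact:
  assumes p: "p \<in> MD" and q: "q \<in> MD" and "\<not> comp_maps_cball_into_ball p q"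
  obtains w where "boundary_contact q w" "boundary_contact p (mob_apply q w)"
proof -
  have "\<exists>w. cmod w \<le> 1 \<and> 1 \<le> cmod (mob_apply p (mob_apply q w))"
    using assms(3) by (simp add: comp_maps_cball_into_ball_def not_less)
  then obtain w where w: "cmod w \<le> 1" and touch: "1 \<le> cmod (mob_apply p (mob_apply q w))"
    by blast
  have "1 \<le> cmod (mob_apply q w)"
  proof (rule ccontr)
    assume "\<not> 1 \<le> cmod (mob_apply q w)"
    then have "cmod (mob_apply q w) < 1" by simp
    then have "cmod (mob_apply p (mob_apply q w)) < 1" by (rule MD_norm_lt_1[OF p])
    with touch show False by simp
  qed
  with w have "boundary_contact q w" by (rule MD_sphere_preimage[OF q])
  moreover have "boundary_contact p (mob_apply q w)"
    using MD_sphere_preimage[OF p MD_norm_le_1[OF q w] touch] .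
  ultimately show thesis by (rule that)
qed

lemma MD_comp_self_map:
  assumes p: "p \<in> MD" and q: "q \<in> MD"
  shows "(mob_apply p \<circ> mob_apply q) holomorphic_on ball 0 1"
    "\<And>u. cmod u < 1 \<Longrightarrow> cmod ((mob_apply p \<circ> mob_apply q) u) < 1"
proof -
  show "(mob_apply p \<circ> mob_apply q) holomorphic_on ball 0 1"
    using MD_univalent(1)[OF p] MD_norm_lt_1[OF q]
    by (intro holomorphic_on_compose_gen[OF MD_univalent(1)[OF q]]) auto
  show "cmod ((mob_apply p \<circ> mob_apply q) u) < 1" if "cmod u < 1" for u
    using MD_norm_lt_1[OF p MD_norm_lt_1[OF q that]] by simp
qed

lemma MD_comp_contraction:
  assumes p: "p \<in> MD" and q: "q \<in> MD" and strict: "comp_maps_cball_into_ball p q"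
  shows "\<exists>s. 0 < s \<and> s < 1 \<and> (\<forall>u. cmod u < 1 \<longrightarrow>
    conf_radius (mob_apply p \<circ> mob_apply q) u \<le> s * (1 - (cmod ((mob_apply p \<circ> mob_apply q) u))^2))"
proof -
  define G where "G = mob_apply p \<circ> mob_apply q"
  have G_hol: "G holomorphic_on ball 0 1" unfolding G_def using MD_comp_self_map[OF p q] by blast
  have "continuous_on (cball 0 1) G"
    unfolding G_def using MD_univalent(3)[OF p] MD_norm_le_1[OF q]
    by (intro continuous_on_compose[OF MD_univalent(3)[OF q]]) (auto elim!: continuous_on_subset)
  moreover have "cmod (G w) < 1" if "w \<in> cball 0 1" for w
    using strict that by (simp add: G_def comp_maps_cball_into_ball_def)
  ultimately obtain s where s: "0 < s" "s < 1" and G_s: "\<And>w. w \<in> cball 0 1 \<Longrightarrow> cmod (G w) < s"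
    using compact_image_in_smaller_ball[OF compact_cball] by metis
  have "conf_radius G u \<le> s * (1 - (cmod (G u))^2)" if "cmod u < 1" for u
    using Schwarz_Pick_shrunk[OF G_hol _ s(1)] G_s s that by simp
  with s show ?thesis unfolding G_def by blast
qed

section \<open>Composition sequences\<close>

lemma comp_seq_univalent_near_cball:
  assumes hf: "\<And>n. f n \<in> MD"
  obtains V where "open V" "cball 0 1 \<subseteq> V" "comp_seq f n holomorphic_on V" "inj_on (comp_seq f n) V"
proof (induction n arbitrary: thesis)
  case 0
  show ?case by (rule 0[of UNIV]) (auto simp: id_def)
next
  case (Suc n)
  obtain V where V: "open V" "cball 0 1 \<subseteq> V" "comp_seq f n holomorphic_on V"
    "inj_on (comp_seq f n) V" by (rule Suc.IH)
  obtain U where U: "open U" "cball 0 1 \<subseteq> U" "mob_apply (f n) holomorphic_on U"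
    "inj_on (mob_apply (f n)) U" using MD_univalent_near_cball[OF hf] .
  let ?W = "U \<inter> mob_apply (f n) -` V"
  show ?case
  proof (rule Suc.prems)
    show "open ?W"
      using continuous_open_preimage[OF holomorphic_on_imp_continuous_on[OF U(3)] U(1) V(1)] .
    show "cball 0 1 \<subseteq> ?W" using U(2) V(2) MD_norm_le_1[OF hf] by (fastforce simp: subset_iff)
    show "comp_seq f (Suc n) holomorphic_on ?W"
      by (auto intro!: holomorphic_on_compose_gen[where t = V]
               intro: holomorphic_on_subset[OF U(3)] V(3))
    show "inj_on (comp_seq f (Suc n)) ?W"
      by (auto intro!: comp_inj_on intro: inj_on_subset[OF U(4)] inj_on_subset[OF V(4)])
  qed
qed

lemma comp_seq_univalent:
  assumes "\<And>n. f n \<in> MD"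
  shows "comp_seq f n holomorphic_on ball 0 1" "inj_on (comp_seq f n) (ball 0 1)"
    "continuous_on (cball 0 1) (comp_seq f n)" "inj_on (comp_seq f n) (cball 0 1)"
proof -
  obtain V where "open V" "cball 0 1 \<subseteq> V" "comp_seq f n holomorphic_on V"
    "inj_on (comp_seq f n) V" using comp_seq_univalent_near_cball[OF assms] .
  from univalent_near_cball_restrict[OF this(2-4)]
  show "comp_seq f n holomorphic_on ball 0 1" "inj_on (comp_seq f n) (ball 0 1)"
    "continuous_on (cball 0 1) (comp_seq f n)" "inj_on (comp_seq f n) (cball 0 1)" by auto
qed

lemma limit_disc_type_ball_subset:
  assumes hf: "\<And>n. f n \<in> MD" and "limit_disc_type f"
  shows "\<exists>c r. 0 < r \<and> (\<forall>n. ball c r \<subseteq> comp_seq f n ` ball 0 1)"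
proof -
  obtain c r where r: "0 < r" and lim: "(\<Inter>n\<in>{1..}. comp_seq f n ` cball 0 1) = cball c r"
    using assms(2) unfolding limit_disc_type_def by blast
  have lower: "cball c r \<subseteq> comp_seq f (Suc k) ` cball 0 1" for k
  proof -
    have "cball c r \<subseteq> (\<Inter>n\<in>{1..}. comp_seq f n ` cball 0 1)" using lim by simp
    also have "\<dots> \<subseteq> comp_seq f (Suc k) ` cball 0 1" by (rule INT_lower) simp
    finally show ?thesis .
  qed
  have disc: "cball c r \<subseteq> comp_seq f n ` cball 0 1" for n
  proof (cases n)
    case 0
    have "comp_seq f 1 ` cball 0 1 \<subseteq> cball 0 1" using MD_norm_le_1[OF hf] by auto
    then show ?thesis using lower[of 0] 0 by simp
  next
    case (Suc k)
    then show ?thesis using lower[of k] by simp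
  qed
  have "ball c r \<subseteq> comp_seq f n ` ball 0 1" for n
  proof -
    obtain V where V: "open V" "cball 0 1 \<subseteq> V" "comp_seq f n holomorphic_on V"
      "inj_on (comp_seq f n) V" using comp_seq_univalent_near_cball[OF hf] .
    have "ball c r = interior (cball c r)" by simp
    also have "\<dots> \<subseteq> interior (comp_seq f n ` cball 0 1)" using disc by (rule interior_mono)
    also have "\<dots> \<subseteq> comp_seq f n ` ball 0 1"
      using V by (intro interior_image_cball_subset holomorphic_on_imp_continuous_on)
    finally show ?thesis .
  qed
  with r show ?thesis by blast
qed

lemma comp_seq_conf_radius_shift:
  assumes hf: "\<And>n. f n \<in> MD" and z: "\<And>n. cmod (z n) < 1" "\<And>n. comp_seq f n (z n) = c"
    and FG: "comp_seq f k = comp_seq f n \<circ> G"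
    and G: "G holomorphic_on ball 0 1" "\<And>u. cmod u < 1 \<Longrightarrow> cmod (G u) < 1"
    and bound: "\<And>u. cmod u < 1 \<Longrightarrow> conf_radius G u \<le> \<kappa> * (1 - (cmod (G u))^2)"
  shows "conf_radius (comp_seq f k) (z k) \<le> \<kappa> * conf_radius (comp_seq f n) (z n)"
proof -
  have "comp_seq f n (G (z k)) = comp_seq f n (z n)" using z(2)[of k] z(2)[of n] FG by simp
  with conf_radius_compose_le[OF comp_seq_univalent(1,2)[OF hf] G bound z(1)[of n] z(1)[of k]]
  show ?thesis by (simp add: FG)
qed

lemma decseq_tendsto_0_if_often_contracting:
  fixes W :: "nat \<Rightarrow> real"
  assumes W: "decseq W" and nonneg: "\<And>n. 0 \<le> W n" and s: "0 \<le> s" "s < 1"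
    and often: "infinite {n. W (Suc (Suc n)) \<le> s * W n}"
  shows "W \<longlonglongrightarrow> 0"
proof -
  have bound: "\<exists>n. W n \<le> s ^ m * W 0" for m
  proof (induction m)
    case 0
    show ?case by auto
  next
    case (Suc m)
    then obtain N where N: "W N \<le> s ^ m * W 0" by blast
    obtain n where n: "N \<le> n" "W (Suc (Suc n)) \<le> s * W n"
      using often unfolding infinite_nat_iff_unbounded_le by blast
    have "W n \<le> W N" using W n(1) by (rule decseqD)
    then have "W (Suc (Suc n)) \<le> s * W N"
      using n(2) mult_left_mono[OF _ s(1)] by (meson order_trans)
    also have "\<dots> \<le> s * (s ^ m * W 0)" using N s(1) by (rule mult_left_mono)
    finally show ?case by (auto simp: mult.assoc)
  qed
  show ?thesis
  proof (rule order_tendstoI)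
    fix a :: real assume "a < 0"
    then have "a < W n" for n using nonneg[of n] by linarith
    then show "\<forall>\<^sub>F n in sequentially. a < W n" by simp
  next
    fix a :: real assume "0 < a"
    have "(\<lambda>m. s ^ m * W 0) \<longlonglongrightarrow> 0"
      using s by (intro tendsto_mult_left_zero LIMSEQ_power_zero) simp
    then have "\<forall>\<^sub>F m in sequentially. s ^ m * W 0 < a" using \<open>0 < a\<close> by (rule order_tendstoD(2))
    then obtain m where "s ^ m * W 0 < a" unfolding eventually_sequentially by blast
    moreover obtain N where "W N \<le> s ^ m * W 0" using bound by blast
    ultimately have "W N < a" by linarith
    have "W n < a" if "N \<le> n" for n
      using decseqD[OF W that] \<open>W N < a\<close> by linarith
    then show "\<forall>\<^sub>F n in sequentially. W n < a" unfolding eventually_sequentially by blast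
  qed
qed

text \<open>Along the sequence, the conformal radius of \<open>F\<^sub>n(\<D>)\<close> at \<open>c\<close> is non-increasing, bounded
  below by \<open>r\<close>, and shrinks by a fixed factor at every occurrence of the pair \<open>(p, q)\<close>.\<close>
lemma limit_disc_finitely_many_occurrences:
  assumes hf: "\<And>n. f n \<in> MD" and r: "0 < r" and ball: "\<And>n. ball c r \<subseteq> comp_seq f n ` ball 0 1"
    and p: "p \<in> MD" and q: "q \<in> MD" and strict: "comp_maps_cball_into_ball p q"
  shows "finite {n. f n = p \<and> f (Suc n) = q}"
proof (rule ccontr)
  assume B: "infinite {n. f n = p \<and> f (Suc n) = q}"
  have "c \<in> comp_seq f n ` ball 0 1" for n using ball[of n] r by auto
  then have "\<forall>n. \<exists>u. cmod u < 1 \<and> comp_seq f n u = c" by fastforce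
  then obtain z where "\<forall>n. cmod (z n) < 1 \<and> comp_seq f n (z n) = c" by (metis choice)
  then have z: "\<And>n. cmod (z n) < 1" "\<And>n. comp_seq f n (z n) = c" by auto
  define W where "W n = conf_radius (comp_seq f n) (z n)" for n
  have "decseq W"
  proof (rule decseq_SucI)
    fix n
    note f_hol = MD_univalent(1)[OF hf[of n]]
    show "W (Suc n) \<le> W n"
      using comp_seq_conf_radius_shift[OF hf z, of "Suc n" n "mob_apply (f n)" 1]
        Schwarz_Pick[OF f_hol] f_hol MD_norm_lt_1[OF hf]
      by (simp add: W_def)
  qed
  obtain s where s: "0 < s" "s < 1" and contract: "\<And>u. cmod u < 1 \<Longrightarrow>
      conf_radius (mob_apply p \<circ> mob_apply q) u \<le> s * (1 - (cmod ((mob_apply p \<circ> mob_apply q) u))^2)"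
    using MD_comp_contraction[OF p q strict] by blast
  have "{n. f n = p \<and> f (Suc n) = q} \<subseteq> {n. W (Suc (Suc n)) \<le> s * W n}"
  proof (rule subsetI)
    fix n assume "n \<in> {n. f n = p \<and> f (Suc n) = q}"
    then have "comp_seq f (Suc (Suc n)) = comp_seq f n \<circ> (mob_apply p \<circ> mob_apply q)"
      by (simp add: o_assoc)
    then have "W (Suc (Suc n)) \<le> s * W n"
      unfolding W_def using MD_comp_self_map[OF p q] contract
      by (rule comp_seq_conf_radius_shift[OF hf z])
    then show "n \<in> {n. W (Suc (Suc n)) \<le> s * W n}" by simp
  qed
  then have often: "infinite {n. W (Suc (Suc n)) \<le> s * W n}" using B finite_subset by blast
  have nonneg: "0 \<le> W n" for n
    using z(1)[of n] by (simp add: W_def conf_radius_def abs_square_le_1 less_imp_le)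
  have "W \<longlonglongrightarrow> 0"
    using decseq_tendsto_0_if_often_contracting[OF \<open>decseq W\<close> nonneg _ s(2) often] s(1) by simp
  moreover have "r \<le> W n" for n
    unfolding W_def using conf_radius_ge_radius[OF comp_seq_univalent(1,2)[OF hf] z(1) r] ball z(2)
    by simp
  ultimately have "r \<le> 0" by (simp add: LIMSEQ_le_const)
  with r show False by simp
qed

lemma limit_disc_finitely_many_strict_pairs:
  assumes fin: "finite \<F>" and "\<F> \<subseteq> MD" and f: "\<And>n. f n \<in> \<F>" and disc: "limit_disc_type f"
  shows "finite {n. comp_maps_cball_into_ball (f n) (f (Suc n))}"
proof -
  have hf: "\<And>n. f n \<in> MD" using f \<open>\<F> \<subseteq> MD\<close> by blast
  obtain c r where r: "0 < r" and ball: "\<And>n. ball c r \<subseteq> comp_seq f n ` ball 0 1"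
    using limit_disc_type_ball_subset[OF hf disc] by blast
  define P where "P = {(p, q) \<in> \<F> \<times> \<F>. comp_maps_cball_into_ball p q}"
  have "finite (\<Union>(p, q)\<in>P. {n. f n = p \<and> f (Suc n) = q})"
  proof (intro finite_UN_I)
    have "P \<subseteq> \<F> \<times> \<F>" by (auto simp: P_def)
    then show "finite P" using finite_subset finite_cartesian_product[OF fin fin] by blast
    show "finite (case pq of (p, q) \<Rightarrow> {n. f n = p \<and> f (Suc n) = q})" if "pq \<in> P" for pq
    proof -
      obtain p q where pq: "pq = (p, q)" by (cases pq)
      with that \<open>\<F> \<subseteq> MD\<close> have "p \<in> MD" "q \<in> MD" "comp_maps_cball_into_ball p q"
        by (auto simp: P_def)
      then show ?thesis using limit_disc_finitely_many_occurrences[OF hf r ball] pq by simp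
    qed
  qed
  moreover have "{n. comp_maps_cball_into_ball (f n) (f (Suc n))}
      \<subseteq> (\<Union>(p, q)\<in>P. {n. f n = p \<and> f (Suc n) = q})"
    using f by (auto simp: P_def)
  ultimately show ?thesis by (rule finite_subset[rotated])
qed

lemma eventually_boundary_contact:
  assumes "finite \<F>" and "\<F> \<subseteq> MD" and "\<And>n. f n \<in> \<F>" and "limit_disc_type f"
  shows "\<exists>N w. \<forall>n\<ge>N.
    boundary_contact (f (Suc n)) (w n) \<and> boundary_contact (f n) (mob_apply (f (Suc n)) (w n))"
proof -
  have hf: "\<And>n. f n \<in> MD" using assms(2,3) by blast
  obtain M where M: "\<And>n. comp_maps_cball_into_ball (f n) (f (Suc n)) \<Longrightarrow> n \<le> M"
    using limit_disc_finitely_many_strict_pairs[OF assms] unfolding finite_nat_set_iff_bounded_le by blast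
  have "\<exists>w. Suc M \<le> n \<longrightarrow>
      boundary_contact (f (Suc n)) w \<and> boundary_contact (f n) (mob_apply (f (Suc n)) w)" for n
  proof (cases "Suc M \<le> n")
    case True
    then have "\<not> comp_maps_cball_into_ball (f n) (f (Suc n))" using M[of n] by auto
    then obtain w where "boundary_contact (f (Suc n)) w" "boundary_contact (f n) (mob_apply (f (Suc n)) w)"
      by (rule MD_comp_boundary_contact[OF hf hf])
    then show ?thesis by blast
  qed simp
  then obtain w where "\<And>n. Suc M \<le> n \<Longrightarrow>
      boundary_contact (f (Suc n)) (w n) \<and> boundary_contact (f n) (mob_apply (f (Suc n)) (w n))"
    by metis
  then show ?thesis by (intro exI[of _ "Suc M"] exI[of _ w] allI impI)
qed

lemma boundary_contact_chain_imp_limit_tangent_type: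
  assumes hf: "\<And>n. f n \<in> MD" and contact_all: "\<forall>n\<ge>N.
    boundary_contact (f (Suc n)) (w n) \<and> boundary_contact (f n) (mob_apply (f (Suc n)) (w n))"
  shows "limit_tangent_type f"
proof -
  have contact: "boundary_contact (f (Suc n)) (w n) \<and> boundary_contact (f n) (mob_apply (f (Suc n)) (w n))"
    if "N \<le> n" for n
    using contact_all that by blast
  have link: "w n = mob_apply (f (Suc (Suc n))) (w (Suc n))" if "N \<le> n" for n
  proof (rule MD_boundary_contact_unique[OF hf])
    show "boundary_contact (f (Suc n)) (w n)" using contact[OF that] by blast
    show "boundary_contact (f (Suc n)) (mob_apply (f (Suc (Suc n))) (w (Suc n)))"
      using contact[of "Suc n"] that by simp
  qed
  define p where "p = comp_seq f (N + 2) (w N)"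
  have p: "comp_seq f (N + k + 2) (w (N + k)) = p" for k
  proof (induction k)
    case 0
    show ?case by (simp add: p_def)
  next
    case (Suc k)
    have "comp_seq f (N + Suc k + 2) (w (N + Suc k))
        = comp_seq f (N + k + 2) (mob_apply (f (Suc (Suc (N + k)))) (w (Suc (N + k))))"
      by (simp add: numeral_2_eq_2)
    also have "\<dots> = comp_seq f (N + k + 2) (w (N + k))" using link[of "N + k"] by simp
    finally show ?case using Suc.IH by simp
  qed
  show ?thesis unfolding limit_tangent_type_def
  proof (intro exI allI impI)
    fix n assume "N + 2 \<le> n"
    define k where "k = n - N - 2"
    then have n: "n = N + k + 2" using \<open>N + 2 \<le> n\<close> by simp
    have "cmod (w (N + k)) = 1" using contact[of "N + k"] by (simp add: boundary_contact_def)
    then have "comp_seq f n (w (N + k)) \<in> frontier (comp_seq f n ` ball 0 1)"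
      by (intro frontier_image_ball comp_seq_univalent[OF hf])
    then show "p \<in> frontier (comp_seq f n ` ball 0 1)" using p[of k] n by simp
  qed
qed

theorem theorem1p1:
  fixes \<F> :: "mobius set" and f :: "nat \<Rightarrow> mobius"
  assumes "finite \<F>" and "\<F> \<subseteq> MD"
    and "\<And>n. f n \<in> \<F>"
    and "limit_disc_type f"
  shows "limit_tangent_type f"
proof -
  have hf: "\<And>n. f n \<in> MD" using assms(2,3) by blast
  obtain N w where "\<forall>n\<ge>N.
      boundary_contact (f (Suc n)) (w n) \<and> boundary_contact (f n) (mob_apply (f (Suc n)) (w n))"
    using eventually_boundary_contact[OF assms] by blast
  then show ?thesis by (rule boundary_contact_chain_imp_limit_tangent_type[OF hf])
qed

end
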